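(* Let $k$ be a field, $R=k[x_1,\ldots,x_n]$, and let $I$ be an almost reverse lexicographic ideal in $R$ whose last generator is $M_\omega=x_1^{\omega_1}\cdots x_\mu^{\omega_\mu}$ with $\omega_\mu>0$. Then the minimal monomial generating set of $I$ is \[\mathcal{G}(I)=\{x_1^{f_1}\}\cup\bigcup_{i=1}^{\mu-1}\{x^\alpha x_{i+1}^{f_{i+1}(\alpha)}:\ \alpha=(\alpha_1,\ldots,\alpha_i)\in\mathcal{I}_i\}.\]
   Context: Monomial order: degree reverse lexicographic: for $M=x^\alpha,N=x^\beta$, $M>N$ iff $\deg M>\deg N$, or degrees are equal and for the largest $s$ with $\alpha_s\neq\beta_s$ one has $\alpha_s<\beta_s$. For $\alpha\in\mathbb{Z}^s_{\ge0}$, $x^\alpha=x_1^{\alpha_1}\cdots x_s^{\alpha_s}$, $|\alpha|=\sum\alpha_j$, and $\alpha\le\beta$ iff $x^\alpha\le x^\beta$. A monomial ideal $I$ is almost reverse lexicographic if for every monomial $M$ and every minimal monomial generator $N$ of $I$ with $\deg M=\deg N$ and $M>N$, one has $M\in I$. $\mathcal{G}(I)$ is the minimal monomial generating set; $\max M$ is the largest $i$ with $x_i\mid M$. The last generator $M_\omega$ is the element of $\mathcal{G}(I)$ of maximal degree that is smallest in the order among elements of $\mathcal{G}(I)$ of that degree; $\mu=\max M_\omega$. $f_1=\min\{t:x_1^t\in I\}$; for $2\le i\le\mu$, $\alpha\in\mathbb{Z}^{i-1}_{\ge0}$, $f_i(\alpha)=\min\{t\ge0:x^\alpha x_i^t\in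 I\}\in\mathbb{Z}_{\ge0}\cup\{\infty\}$. For $1\le i\le\mu-2$, $\mathcal{I}_i=\{(\alpha_1,\ldots,\alpha_i)\in\mathbb{Z}^i_{\ge0}: 0\le\alpha_1<f_1,\ 0\le\alpha_j<f_j(\alpha_1,\ldots,\alpha_{j-1})\ (2\le j\le i)\}$, and $\mathcal{I}_{\mu-1}$ is the set of $(\alpha_1,\ldots,\alpha_{\mu-1})$ satisfying these inequalities for $j\le\mu-1$ together with $(\alpha_1,\ldots,\alpha_{\mu-1})\ge(\omega_1,\ldots,\omega_{\mu-1})$. (If $\mu=1$ the union is empty.) *)

theory Defs
  imports Main "HOL-Library.Extended_Nat"
begin

text \<open>Monomials of k[x_1,...,x_n] are represented by their exponent vectors,
  functions nat => nat supported on {1..n}.  A monomial ideal is determined by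
  the set of monomials it contains, which is upward closed under divisibility.\<close>

definition monoms :: "nat \<Rightarrow> (nat \<Rightarrow> nat) set" where
  "monoms n = {a. \<forall>i. a i \<noteq> 0 \<longrightarrow> 1 \<le> i \<and> i \<le> n}"

definition mdeg :: "nat \<Rightarrow> (nat \<Rightarrow> nat) \<Rightarrow> nat" where
  "mdeg n a = (\<Sum>i=1..n. a i)"

definition mdvd :: "(nat \<Rightarrow> nat) \<Rightarrow> (nat \<Rightarrow> nat) \<Rightarrow> bool" where
  "mdvd a b = (\<forall>i. a i \<le> b i)"

definition drl_gt :: "nat \<Rightarrow> (nat \<Rightarrow> nat) \<Rightarrow> (nat \<Rightarrow> nat) \<Rightarrow> bool" where
  "drl_gt n a b = (mdeg n a > mdeg n b \<or>
     (mdeg n a = mdeg n b \<and> (\<exists>s\<in>{1..n}. a s \<noteq> b s \<and>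
        (\<forall>t\<in>{s<..n}. a t = b t) \<and> a s < b s)))"

definition monomial_ideal :: "nat \<Rightarrow> (nat \<Rightarrow> nat) set \<Rightarrow> bool" where
  "monomial_ideal n I = (I \<subseteq> monoms n \<and>
     (\<forall>a\<in>I. \<forall>b\<in>monoms n. mdvd a b \<longrightarrow> b \<in> I))"

definition mingens :: "(nat \<Rightarrow> nat) set \<Rightarrow> (nat \<Rightarrow> nat) set" where
  "mingens I = {a\<in>I. \<forall>b\<in>I. mdvd b a \<longrightarrow> b = a}"

definition almost_revlex :: "nat \<Rightarrow> (nat \<Rightarrow> nat) set \<Rightarrow> bool" where
  "almost_revlex n I = (\<forall>M\<in>monoms n. \<forall>N\<in>mingens I.
      mdeg n M = mdeg n N \<and> drl_gt n M N \<longrightarrow> M \<in> I)"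

definition last_gen :: "nat \<Rightarrow> (nat \<Rightarrow> nat) set \<Rightarrow> (nat \<Rightarrow> nat) \<Rightarrow> bool" where
  "last_gen n I w = (w \<in> mingens I \<and> (\<forall>N\<in>mingens I. mdeg n N \<le> mdeg n w) \<and>
      (\<forall>N\<in>mingens I. mdeg n N = mdeg n w \<longrightarrow> N = w \<or> drl_gt n N w))"

text \<open>f_i(alpha) = min{t. x^alpha x_i^t \<in> I} (infinity if none), where alpha is
  supported on {1..i-1}; f_1 = fval I 1 (\<lambda>_. 0).\<close>
definition fval :: "(nat \<Rightarrow> nat) set \<Rightarrow> nat \<Rightarrow> (nat \<Rightarrow> nat) \<Rightarrow> enat" where
  "fval I i \<alpha> = (if \<exists>t. \<alpha>(i := t) \<in> I then enat (LEAST t. \<alpha>(i := t) \<in> I) else \<infinity>)"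

definition trunc :: "nat \<Rightarrow> (nat \<Rightarrow> nat) \<Rightarrow> (nat \<Rightarrow> nat)" where
  "trunc j a = (\<lambda>k. if k \<le> j then a k else 0)"

definition Iset :: "nat \<Rightarrow> (nat \<Rightarrow> nat) set \<Rightarrow> (nat \<Rightarrow> nat) \<Rightarrow> nat \<Rightarrow> nat \<Rightarrow> (nat \<Rightarrow> nat) set" where
  "Iset n I w \<mu> i = {\<alpha>\<in>monoms i.
      (\<forall>j\<in>{1..i}. enat (\<alpha> j) < fval I j (trunc (j - 1) \<alpha>)) \<and>
      (i = \<mu> - 1 \<longrightarrow> (\<alpha> = trunc (\<mu> - 1) w \<or> drl_gt n \<alpha> (trunc (\<mu> - 1) w)))}"

end

theory Submission
  imports Defs
begin

text \<open>Almost reverse lexicographic ideals are strongly stable: x^a \<in> I and j < m with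
  a_m > 0 give x^a x_j / x_m \<in> I. For such ideals x^\<alpha> x_{i+1}^{f_{i+1}(\<alpha>)} is a minimal
  generator whenever \<alpha> lies under the staircase (\<alpha>_j < f_j(\<alpha>_1,...,\<alpha>_{j-1}) for all j \<le> i),
  and conversely a minimal generator whose last variable is x_m has this form with i = m - 1.
  Which m and \<alpha> occur is decided by comparing a minimal generator u with the divisors of the
  last generator w of degree deg u: none of them can exceed u, since it would then lie in I
  and so equal w. This forces m \<le> \<mu>, and \<alpha> \<ge> (\<omega>_1,...,\<omega>_{\<mu>-1}) when m = \<mu>. The
  relevant values f_i are finite because every monomial of degree deg w above w lies in I.\<close>

lemma monomsD: "a \<in> monoms n \<Longrightarrow> a i \<noteq> 0 \<Longrightarrow> 1 \<le> i \<and> i \<le> n"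
  by (auto simp: monoms_def)

lemma monoms_zero: "a \<in> monoms n \<Longrightarrow> i = 0 \<or> n < i \<Longrightarrow> a i = 0"
  using monomsD by fastforce

lemma monoms_mono: "m \<le> n \<Longrightarrow> a \<in> monoms m \<Longrightarrow> a \<in> monoms n"
  unfolding monoms_def using le_trans by blast

lemma monoms_fun_upd: "a \<in> monoms n \<Longrightarrow> 1 \<le> k \<Longrightarrow> k \<le> n \<Longrightarrow> a(k := t) \<in> monoms n"
  by (auto simp: monoms_def)

lemma monoms_fun_upd_zero: "a \<in> monoms n \<Longrightarrow> a(k := 0) \<in> monoms n"
  by (auto simp: monoms_def)

lemma mdvd_refl: "mdvd a a"
  by (simp add: mdvd_def)

lemma mdvd_trans: "mdvd a b \<Longrightarrow> mdvd b c \<Longrightarrow> mdvd a c"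
  unfolding mdvd_def using order_trans by blast

lemma mdvd_monoms:
  assumes "mdvd b a" "a \<in> monoms n"
  shows "b \<in> monoms n"
proof -
  have "a i \<noteq> 0" if "b i \<noteq> 0" for i
    using assms(1) that unfolding mdvd_def by (metis le_zero_eq)
  then show ?thesis using monomsD[OF assms(2)] unfolding monoms_def by blast
qed

lemma monoms_max_support:
  assumes "a \<in> monoms n" "a \<noteq> (\<lambda>_. 0)"
  obtains m where "1 \<le> m" "m \<le> n" "a m > 0" "\<forall>k>m. a k = 0"
proof -
  define S where "S = {k. a k \<noteq> 0}"
  have "S \<subseteq> {1..n}" using monomsD[OF assms(1)] by (auto simp: S_def)
  then have fin: "finite S" by (rule finite_subset) simp
  have "S \<noteq> {}" using assms(2) by (auto simp: S_def fun_eq_iff)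
  then have "a (Max S) > 0" using fin Max_in[OF fin] by (simp add: S_def)
  moreover have "\<forall>k>Max S. a k = 0"
    using fin Max_ge not_le unfolding S_def by blast
  ultimately show ?thesis using that monomsD[OF assms(1), of "Max S"] by auto
qed

lemma mdeg_fun_upd:
  assumes "1 \<le> k" "k \<le> n"
  shows "mdeg n (a(k := t)) + a k = mdeg n a + t"
proof -
  have k: "k \<in> {1..n}" using assms by auto
  have "mdeg n (a(k := t)) = t + (\<Sum>i\<in>{1..n}-{k}. a i)"
    unfolding mdeg_def by (subst sum.remove[OF _ k]) auto
  moreover have "mdeg n a = a k + (\<Sum>i\<in>{1..n}-{k}. a i)"
    unfolding mdeg_def by (rule sum.remove[OF _ k]) simp
  ultimately show ?thesis by simp
qed

lemma mdeg_zero [simp]: "mdeg n (\<lambda>_. 0) = 0"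
  by (simp add: mdeg_def)

lemma mdeg_less_if_mdvd:
  assumes "a \<in> monoms n" "mdvd b a" "b \<noteq> a"
  shows "mdeg n b < mdeg n a"
proof -
  obtain i where i: "b i \<noteq> a i" using assms(3) by blast
  then have lt: "b i < a i" using assms(2) by (simp add: mdvd_def le_neq_implies_less)
  then have "i \<in> {1..n}" using monomsD[OF assms(1), of i] by auto
  then show ?thesis unfolding mdeg_def
    by (intro sum_strict_mono_ex1) (use assms(2) lt in \<open>auto simp: mdvd_def\<close>)
qed

lemma exists_mdvd_mdeg:
  assumes "a \<in> monoms n" "k \<le> mdeg n a"
  shows "\<exists>b. mdvd b a \<and> mdeg n b = k"
  using assms
proof (induction "mdeg n a - k" arbitrary: a)
  case 0
  then show ?case using mdvd_refl by auto
next
  case (Suc d)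
  have "mdeg n a \<noteq> 0" using Suc by linarith
  then obtain i where i: "i \<in> {1..n}" "a i \<noteq> 0" unfolding mdeg_def by (meson sum.neutral)
  define a' where "a' = a(i := a i - 1)"
  have a'M: "a' \<in> monoms n" using Suc.prems i unfolding a'_def by (auto intro: monoms_fun_upd)
  have "mdeg n a' + a i = mdeg n a + (a i - 1)" unfolding a'_def using i mdeg_fun_upd by auto
  then have "d = mdeg n a' - k" "k \<le> mdeg n a'" using Suc i by auto
  then obtain b where "mdvd b a'" "mdeg n b = k" using Suc.hyps a'M by blast
  moreover have "mdvd a' a" unfolding a'_def mdvd_def by auto
  ultimately show ?case using mdvd_trans by blast
qed

lemma drl_gtI:
  assumes "mdeg n a = mdeg n b" "s \<in> {1..n}" "a s < b s" "\<forall>t\<in>{s<..n}. a t = b t"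
  shows "drl_gt n a b"
  unfolding drl_gt_def using assms by (intro disjI2 conjI bexI[of _ s]) auto

lemma drl_gt_if_mdeg_less: "mdeg n b < mdeg n a \<Longrightarrow> drl_gt n a b"
  by (simp add: drl_gt_def)

lemma drl_gt_asym:
  assumes "drl_gt n a b"
  shows "\<not> drl_gt n b a"
proof
  assume "drl_gt n b a"
  with assms have "mdeg n a = mdeg n b" unfolding drl_gt_def by linarith
  with assms \<open>drl_gt n b a\<close> obtain s s' where
    s: "s \<in> {1..n}" "a s < b s" "\<forall>t\<in>{s<..n}. a t = b t" and
    s': "s' \<in> {1..n}" "b s' < a s'" "\<forall>t\<in>{s'<..n}. b t = a t"
    unfolding drl_gt_def by (metis less_irrefl)
  consider "s < s'" | "s' < s" | "s = s'" by linarith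
  then show False
  proof cases
    case 1
    then have "a s' = b s'" using s(3) s'(1) by auto
    then show False using s'(2) by simp
  next
    case 2
    then have "a s = b s" using s'(3) s(1) by auto
    then show False using s(2) by simp
  next
    case 3
    then show False using s(2) s'(2) by simp
  qed
qed

lemma drl_gt_irrefl: "\<not> drl_gt n a a"
  using drl_gt_asym by blast

lemma drl_gt_total:
  assumes "a \<in> monoms n" "b \<in> monoms n" "mdeg n a = mdeg n b" "a \<noteq> b"
  shows "drl_gt n a b \<or> drl_gt n b a"
proof -
  define D where "D = {k\<in>{1..n}. a k \<noteq> b k}"
  obtain k where k: "a k \<noteq> b k" using assms(4) by blast
  then have "a k \<noteq> 0 \<or> b k \<noteq> 0" by auto
  then have "k \<in> D" using k monomsD[OF assms(1)] monomsD[OF assms(2)] unfolding D_def by auto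
  moreover have fin: "finite D" unfolding D_def by simp
  ultimately have s: "Max D \<in> {1..n}" "a (Max D) \<noteq> b (Max D)"
    using Max_in[OF fin] unfolding D_def by blast+
  have above: "\<forall>t\<in>{Max D<..n}. a t = b t"
  proof
    fix t assume t: "t \<in> {Max D<..n}"
    then have "t \<notin> D" using Max_ge[OF fin] by fastforce
    then show "a t = b t" using t s(1) unfolding D_def by auto
  qed
  show ?thesis
  proof (cases "a (Max D) < b (Max D)")
    case True
    then show ?thesis using drl_gtI[OF assms(3) s(1) _ above] by blast
  next
    case False
    then have "b (Max D) < a (Max D)" using s(2) by simp
    then show ?thesis using drl_gtI[OF assms(3)[symmetric] s(1)] above by auto
  qed
qed

lemma drl_gt_fun_upd:
  assumes "drl_gt n a b" "a k = b k" "1 \<le> k" "k \<le> n"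
  shows "drl_gt n (a(k := t)) (b(k := t))"
proof -
  have deg: "mdeg n (a(k := t)) + b k = mdeg n a + t" "mdeg n (b(k := t)) + b k = mdeg n b + t"
    using mdeg_fun_upd[OF assms(3,4)] assms(2) by metis+
  from assms(1) consider "mdeg n b < mdeg n a"
    | s where "mdeg n a = mdeg n b" "s \<in> {1..n}" "a s \<noteq> b s" "a s < b s" "\<forall>t\<in>{s<..n}. a t = b t"
    unfolding drl_gt_def by blast
  then show ?thesis
  proof cases
    case 1
    then show ?thesis using deg by (intro drl_gt_if_mdeg_less) linarith
  next
    case 2
    then have "s \<noteq> k" using assms(2) by auto
    then show ?thesis using deg 2 by (intro drl_gtI[of n _ _ s]) auto
  qed
qed

lemma fval_finite_if_mem: "\<alpha>(i := t) \<in> I \<Longrightarrow> fval I i \<alpha> \<noteq> \<infinity>"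
  by (auto simp: fval_def)

lemma fval_enatD:
  assumes "fval I i \<alpha> = enat f"
  shows "\<alpha>(i := f) \<in> I" and "s < f \<Longrightarrow> \<alpha>(i := s) \<notin> I"
proof -
  have ex: "\<exists>t. \<alpha>(i := t) \<in> I" using assms by (auto simp: fval_def split: if_splits)
  then have f: "f = (LEAST t. \<alpha>(i := t) \<in> I)" using assms by (auto simp: fval_def)
  show "\<alpha>(i := f) \<in> I" unfolding f using ex by (rule LeastI_ex)
  show "s < f \<Longrightarrow> \<alpha>(i := s) \<notin> I" unfolding f using not_less_Least by blast
qed

lemma fval_le_if_mem: "\<alpha>(i := t) \<in> I \<Longrightarrow> fval I i \<alpha> \<le> enat t"
  by (auto simp: fval_def intro: Least_le)

lemma fval_eq_enatI: "\<alpha>(i := t) \<in> I \<Longrightarrow> (\<And>s. s < t \<Longrightarrow> \<alpha>(i := s) \<notin> I) \<Longrightarrow> fval I i \<alpha> = enat t"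
  unfolding fval_def by (auto intro!: Least_equality) (meson not_less)

lemma monomial_ideal_monoms: "monomial_ideal n I \<Longrightarrow> a \<in> I \<Longrightarrow> a \<in> monoms n"
  by (auto simp: monomial_ideal_def)

lemma monomial_ideal_mdvd: "monomial_ideal n I \<Longrightarrow> a \<in> I \<Longrightarrow> mdvd a b \<Longrightarrow> b \<in> monoms n \<Longrightarrow> b \<in> I"
  by (auto simp: monomial_ideal_def)

lemma mingensD: "u \<in> mingens I \<Longrightarrow> b \<in> I \<Longrightarrow> mdvd b u \<Longrightarrow> b = u"
  by (simp add: mingens_def)

lemma mingens_subset_ideal: "mingens I \<subseteq> I"
  by (auto simp: mingens_def)

lemma exists_mingens_mdvd:
  assumes "monomial_ideal n I" "a \<in> I"
  shows "\<exists>g\<in>mingens I. mdvd g a"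
  using assms(2)
proof (induction "mdeg n a" arbitrary: a rule: less_induct)
  case (less a)
  show ?case
  proof (cases "a \<in> mingens I")
    case True
    then show ?thesis using mdvd_refl by blast
  next
    case False
    then obtain b where b: "b \<in> I" "mdvd b a" "b \<noteq> a" using less.prems unfolding mingens_def by blast
    have "mdeg n b < mdeg n a"
      using mdeg_less_if_mdvd[OF monomial_ideal_monoms[OF assms(1) less.prems] b(2,3)] .
    then obtain g where "g \<in> mingens I" "mdvd g b" using less.hyps b(1) by blast
    then show ?thesis using b(2) mdvd_trans by blast
  qed
qed

text \<open>If the minimal generator g below a uses fewer factors x_m than a, the exchange already
  takes place inside a/g; otherwise g x_j / x_m is a monomial of the same degree above g.\<close>

lemma almost_revlex_exchange:
  assumes I: "monomial_ideal n I" "almost_revlex n I"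
    and a: "a \<in> I" and j: "1 \<le> j" "j < m" and am: "a m > 0"
  shows "a(m := a m - 1, j := a j + 1) \<in> I"
proof -
  let ?a' = "a(m := a m - 1, j := a j + 1)"
  have aM: "a \<in> monoms n" using monomial_ideal_monoms[OF I(1) a] .
  have m: "1 \<le> m" "m \<le> n" using monomsD[OF aM, of m] am by auto
  have a'M: "?a' \<in> monoms n" using aM j m by (auto intro!: monoms_fun_upd)
  obtain g where g: "g \<in> mingens I" "mdvd g a" using exists_mingens_mdvd[OF I(1) a] by blast
  then have gI: "g \<in> I" using mingens_subset_ideal by blast
  show ?thesis
  proof (cases "g m < a m")
    case True
    have "mdvd g ?a'"
      unfolding mdvd_def
    proof
      fix i show "g i \<le> ?a' i"
        using g(2) True j unfolding mdvd_def by (cases "i = j"; cases "i = m") (auto simp: le_SucI)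
    qed
    then show ?thesis using monomial_ideal_mdvd[OF I(1) gI _ a'M] by blast
  next
    case False
    then have gm: "g m = a m" using g(2) by (auto simp: mdvd_def intro: le_antisym)
    let ?g' = "g(m := g m - 1, j := g j + 1)"
    have g'M: "?g' \<in> monoms n"
      using monomial_ideal_monoms[OF I(1) gI] j m by (auto intro!: monoms_fun_upd)
    have "mdeg n (g(m := g m - 1)) + g m = mdeg n g + (g m - 1)"
      using mdeg_fun_upd m by blast
    moreover have "mdeg n ?g' + g j = mdeg n (g(m := g m - 1)) + (g j + 1)"
      using mdeg_fun_upd[of j n "g(m := g m - 1)"] j m by auto
    ultimately have deg: "mdeg n ?g' = mdeg n g" using gm am by auto
    have "drl_gt n ?g' g"
      by (rule drl_gtI[OF deg, of m]) (use m j gm am in \<open>auto simp: mdvd_def\<close>)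
    then have g'I: "?g' \<in> I" using I(2) g(1) g'M deg unfolding almost_revlex_def by blast
    have "mdvd ?g' ?a'"
      unfolding mdvd_def
    proof
      fix i show "?g' i \<le> ?a' i"
        using g(2) gm j unfolding mdvd_def by (cases "i = j"; cases "i = m") auto
    qed
    then show ?thesis using monomial_ideal_mdvd[OF I(1) g'I _ a'M] by blast
  qed
qed

lemma fun_upd_trunc_eq: "\<alpha> \<in> monoms i \<Longrightarrow> (trunc (i - 1) \<alpha>)(i := \<alpha> i) = \<alpha>"
  using monoms_zero[of \<alpha> i] by (auto simp: fun_eq_iff trunc_def)

lemma not_mem_if_less_fval:
  assumes "\<alpha> \<in> monoms i" "enat (\<alpha> i) < fval I i (trunc (i - 1) \<alpha>)"
  shows "\<alpha> \<notin> I"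
  using assms fval_le_if_mem[of "trunc (i - 1) \<alpha>" i "\<alpha> i" I] fun_upd_trunc_eq[OF assms(1)]
  by auto

lemma mdvd_fun_upd_fval_eq:
  assumes I: "monomial_ideal n I" and f: "fval I i \<alpha> = enat f"
    and upd_monoms: "\<And>t. \<alpha>(i := t) \<in> monoms n"
    and b: "b \<in> I" "mdvd b (\<alpha>(i := f))"
  shows "b i = f"
proof -
  have b_le: "b t \<le> (\<alpha>(i := f)) t" for t using b(2) unfolding mdvd_def by blast
  have "mdvd b (\<alpha>(i := b i))"
    unfolding mdvd_def using b_le by (metis fun_upd_apply order_refl)
  then have "\<alpha>(i := b i) \<in> I" using monomial_ideal_mdvd[OF I b(1) _ upd_monoms] by blast
  then show ?thesis using fval_enatD(2)[OF f, of "b i"] b_le[of i] by (auto simp: le_less)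
qed

text \<open>The exchange property lets a divisor b of x^\<alpha> x_{i+1}^f that lies in I trade one
  factor x_{i+1} for a missing factor x_k, k \<le> i, producing an element of I dividing
  x^\<alpha> x_{i+1}^{f-1}.\<close>

lemma fval_fun_upd_in_mingens:
  assumes I: "monomial_ideal n I" "almost_revlex n I"
    and \<alpha>: "\<alpha> \<in> monoms i" "i < n"
    and staircase: "\<forall>j\<in>{1..i}. enat (\<alpha> j) < fval I j (trunc (j - 1) \<alpha>)"
    and f: "fval I (i + 1) \<alpha> = enat f"
  shows "\<alpha>(i + 1 := f) \<in> mingens I"
proof -
  have \<alpha>n: "\<alpha> \<in> monoms n" using monoms_mono[OF _ \<alpha>(1)] \<alpha>(2) by simp
  have upd_monoms: "\<alpha>(i + 1 := t) \<in> monoms n" for t using monoms_fun_upd[OF \<alpha>n] \<alpha>(2) by simp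
  have uI: "\<alpha>(i + 1 := f) \<in> I" using fval_enatD(1)[OF f] .
  have "b = \<alpha>(i + 1 := f)" if bI: "b \<in> I" and bd: "mdvd b (\<alpha>(i + 1 := f))" for b
  proof (rule ccontr)
    assume "b \<noteq> \<alpha>(i + 1 := f)"
    then obtain k where k: "b k \<noteq> (\<alpha>(i + 1 := f)) k" by blast
    have b_le: "b t \<le> (\<alpha>(i + 1 := f)) t" for t using bd unfolding mdvd_def by blast
    have bi: "b (i + 1) = f" using mdvd_fun_upd_fval_eq[OF I(1) f upd_monoms bI bd] .
    then have "k \<noteq> i + 1" using k by auto
    then have bk: "b k < \<alpha> k" using k b_le[of k] by simp
    then have k_range: "1 \<le> k" "k \<le> i" using monomsD[OF \<alpha>(1), of k] by auto
    then have "\<alpha> \<notin> I" using not_mem_if_less_fval[OF \<alpha>(1)] staircase by auto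
    moreover have "\<alpha>(i + 1 := 0) = \<alpha>" using monoms_zero[OF \<alpha>(1), of "i + 1"] by auto
    ultimately have f_pos: "f > 0" using uI by (cases f) auto
    have "b(i + 1 := b (i + 1) - 1, k := b k + 1) \<in> I"
      using almost_revlex_exchange[OF I bI, of k "i + 1"] k_range bi f_pos by simp
    moreover have "mdvd (b(i + 1 := b (i + 1) - 1, k := b k + 1)) (\<alpha>(i + 1 := f - 1))"
      unfolding mdvd_def
    proof
      fix t show "(b(i + 1 := b (i + 1) - 1, k := b k + 1)) t \<le> (\<alpha>(i + 1 := f - 1)) t"
        using b_le[of t] bi bk \<open>k \<noteq> i + 1\<close> by (cases "t = k"; cases "t = i + 1") auto
    qed
    ultimately have "\<alpha>(i + 1 := f - 1) \<in> I" using monomial_ideal_mdvd[OF I(1) _ _ upd_monoms] by blast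
    then show False using fval_enatD(2)[OF f, of "f - 1"] f_pos by simp
  qed
  then show ?thesis using uI unfolding mingens_def by blast
qed

lemma mingens_fval_eq: "u \<in> mingens I \<Longrightarrow> fval I m (u(m := 0)) = enat (u m)"
proof (rule fval_eq_enatI)
  assume u: "u \<in> mingens I"
  then show "(u(m := 0))(m := u m) \<in> I" using mingens_subset_ideal by auto
  fix s assume "s < u m"
  moreover have "mdvd ((u(m := 0))(m := s)) u" using \<open>s < u m\<close> unfolding mdvd_def by simp
  ultimately show "(u(m := 0))(m := s) \<notin> I" using mingensD[OF u] by fastforce
qed

lemma mingens_less_fval:
  assumes u: "u \<in> mingens I" and "j < m" "u m > 0"
  shows "enat (u j) < fval I j (trunc (j - 1) u)"
proof (rule ccontr)
  assume "\<not> enat (u j) < fval I j (trunc (j - 1) u)"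
  then obtain f where f: "fval I j (trunc (j - 1) u) = enat f" "f \<le> u j"
    by (cases "fval I j (trunc (j - 1) u)") auto
  let ?v = "(trunc (j - 1) u)(j := f)"
  have "mdvd ?v u" using f(2) unfolding mdvd_def trunc_def by auto
  then have "?v = u" using mingensD[OF u fval_enatD(1)[OF f(1)]] by blast
  moreover have "?v m = 0" using \<open>j < m\<close> by (auto simp: trunc_def)
  ultimately show False using \<open>u m > 0\<close> by simp
qed

locale almost_revlex_ideal =
  fixes n \<mu> :: nat and I :: "(nat \<Rightarrow> nat) set" and w :: "nat \<Rightarrow> nat"
  assumes I_monomial: "monomial_ideal n I" and I_almost_revlex: "almost_revlex n I"
    and w_last_gen: "last_gen n I w"
    and mu_ge_1: "1 \<le> \<mu>" and mu_le_n: "\<mu> \<le> n"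
    and w_mu_pos: "w \<mu> > 0" and w_above_mu: "\<forall>i>\<mu>. w i = 0"
begin

lemma w_mingens: "w \<in> mingens I"
  using w_last_gen by (simp add: last_gen_def)

lemma w_monoms: "w \<in> monoms n"
  using monomial_ideal_monoms[OF I_monomial] w_mingens mingens_subset_ideal by blast

lemma mdeg_mingens_le: "u \<in> mingens I \<Longrightarrow> mdeg n u \<le> mdeg n w"
  using w_last_gen by (simp add: last_gen_def)

lemma mdeg_fun_upd_mu: "mdeg n (a(\<mu> := t)) + a \<mu> = mdeg n a + t"
  using mdeg_fun_upd mu_ge_1 mu_le_n by blast

lemma zero_not_mem: "(\<lambda>_. 0) \<notin> I"
proof
  assume "(\<lambda>_. 0) \<in> I"
  then have "(\<lambda>_. 0) = w" using mingensD[OF w_mingens] by (auto simp: mdvd_def)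
  then show False using w_mu_pos by auto
qed

lemma mem_if_drl_gt_last_gen:
  "v \<in> monoms n \<Longrightarrow> mdeg n v = mdeg n w \<Longrightarrow> drl_gt n v w \<Longrightarrow> v \<in> I"
  using I_almost_revlex w_mingens unfolding almost_revlex_def by blast

lemma mem_if_less_at_mu:
  assumes "v \<in> monoms n" "mdeg n v = mdeg n w" "v \<mu> < w \<mu>" "\<forall>t>\<mu>. v t = 0"
  shows "v \<in> I"
  using assms w_above_mu mu_ge_1 mu_le_n
  by (intro mem_if_drl_gt_last_gen drl_gtI[of n _ _ \<mu>]) auto

text \<open>Such a v would lie in I by almost reverse lexicographicity, hence equal w,
  contradicting that w is the smallest generator of top degree.\<close>

lemma not_drl_gt_mingens_if_mdvd_w:
  assumes u: "u \<in> mingens I" and v: "mdvd v w" "mdeg n v = mdeg n u"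
  shows "\<not> drl_gt n v u"
proof
  assume gt: "drl_gt n v u"
  have "v \<in> I"
    using I_almost_revlex u mdvd_monoms[OF v(1) w_monoms] v(2) gt unfolding almost_revlex_def by blast
  then have "v = w" using mingensD[OF w_mingens] v(1) by blast
  then have "u = w \<or> drl_gt n u w" using w_last_gen u v(2) by (simp add: last_gen_def)
  then show False using gt \<open>v = w\<close> drl_gt_asym drl_gt_irrefl by blast
qed

lemma mingens_monoms_mu:
  assumes u: "u \<in> mingens I"
  shows "u \<in> monoms \<mu>"
proof (rule ccontr)
  assume "u \<notin> monoms \<mu>"
  have uM: "u \<in> monoms n" using monomial_ideal_monoms[OF I_monomial] u mingens_subset_ideal by blast
  obtain k where k: "u k \<noteq> 0" "\<mu> < k"
    using \<open>u \<notin> monoms \<mu>\<close> monomsD[OF uM] unfolding monoms_def by (auto simp: not_le)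
  then obtain m where m: "1 \<le> m" "m \<le> n" "u m > 0" "\<forall>t>m. u t = 0"
    using monoms_max_support[OF uM] by (metis (full_types))
  have "\<mu> < m" using k m(4) by (meson le_less_trans not_le)
  obtain v where v: "mdvd v w" "mdeg n v = mdeg n u"
    using exists_mdvd_mdeg[OF w_monoms mdeg_mingens_le[OF u]] by blast
  have "v t = 0" if "\<mu> < t" for t using v(1) w_above_mu that unfolding mdvd_def by (metis le_zero_eq)
  then have "drl_gt n v u"
    using \<open>\<mu> < m\<close> m by (intro drl_gtI[OF v(2), of m]) auto
  then show False using not_drl_gt_mingens_if_mdvd_w[OF u v] by blast
qed

text \<open>Take a divisor of w with fewer factors x_\<mu> than u and, otherwise, of the right degree.\<close>

lemma exists_mdvd_w_drl_gt:
  assumes u: "u \<in> monoms \<mu>" "u \<mu> > 0" "mdeg n u \<le> mdeg n w"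
    and less: "mdeg n (u(\<mu> := 0)) < mdeg n (w(\<mu> := 0))"
  shows "\<exists>v. mdvd v w \<and> mdeg n v = mdeg n u \<and> drl_gt n v u"
proof -
  define \<omega> s where "\<omega> = w(\<mu> := 0)" and "s = min (u \<mu> - 1) (w \<mu>)"
  have "mdeg n u - s \<le> mdeg n \<omega>"
    using mdeg_fun_upd_mu[of u 0] mdeg_fun_upd_mu[of w 0] u(3) less unfolding \<omega>_def s_def by simp
  then obtain \<beta> where \<beta>: "mdvd \<beta> \<omega>" "mdeg n \<beta> = mdeg n u - s"
    using exists_mdvd_mdeg w_monoms monoms_fun_upd_zero unfolding \<omega>_def by blast
  have \<beta>_le: "\<beta> t \<le> \<omega> t" for t using \<beta>(1) unfolding mdvd_def by blast
  have "mdvd (\<beta>(\<mu> := s)) w"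
    unfolding mdvd_def
  proof
    fix t show "(\<beta>(\<mu> := s)) t \<le> w t" using \<beta>_le[of t] by (cases "t = \<mu>") (auto simp: \<omega>_def s_def)
  qed
  moreover have deg: "mdeg n (\<beta>(\<mu> := s)) = mdeg n u"
    using mdeg_fun_upd_mu[of \<beta> s] mdeg_fun_upd_mu[of u 0] \<beta>(2) \<beta>_le[of \<mu>] u(2)
    unfolding \<omega>_def s_def by auto
  moreover have "drl_gt n (\<beta>(\<mu> := s)) u"
  proof (rule drl_gtI[OF deg, of \<mu>])
    show "\<forall>t\<in>{\<mu><..n}. (\<beta>(\<mu> := s)) t = u t"
    proof
      fix t assume "t \<in> {\<mu><..n}"
      then show "(\<beta>(\<mu> := s)) t = u t"
        using \<beta>_le[of t] w_above_mu monoms_zero[OF u(1), of t] by (simp add: \<omega>_def)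
    qed
  qed (use mu_ge_1 mu_le_n u(2) in \<open>auto simp: s_def\<close>)
  ultimately show ?thesis by blast
qed

lemma mingens_lower_part_ge:
  assumes u: "u \<in> mingens I" and u_mu: "u \<mu> > 0"
  shows "u(\<mu> := 0) = w(\<mu> := 0) \<or> drl_gt n (u(\<mu> := 0)) (w(\<mu> := 0))"
proof (rule ccontr)
  define \<alpha> \<omega> where "\<alpha> = u(\<mu> := 0)" and "\<omega> = w(\<mu> := 0)"
  assume "\<not> ?thesis"
  then have ne: "\<alpha> \<noteq> \<omega>" and not_gt: "\<not> drl_gt n \<alpha> \<omega>" unfolding \<alpha>_def \<omega>_def by auto
  have u\<mu>: "u \<in> monoms \<mu>" using mingens_monoms_mu[OF u] .
  have \<alpha>M: "\<alpha> \<in> monoms n" and \<omega>M: "\<omega> \<in> monoms n"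
    using monoms_mono[OF mu_le_n u\<mu>] w_monoms unfolding \<alpha>_def \<omega>_def by (auto intro: monoms_fun_upd_zero)
  have deg: "mdeg n \<alpha> + u \<mu> = mdeg n u" "mdeg n \<omega> + w \<mu> = mdeg n w" "mdeg n u \<le> mdeg n w"
    using mdeg_fun_upd_mu[of u 0] mdeg_fun_upd_mu[of w 0] mdeg_mingens_le[OF u] unfolding \<alpha>_def \<omega>_def by auto
  have "mdeg n \<alpha> \<le> mdeg n \<omega>" using not_gt drl_gt_if_mdeg_less not_le by blast
  have "\<exists>v. mdvd v w \<and> mdeg n v = mdeg n u \<and> drl_gt n v u"
  proof (cases "mdeg n \<alpha> = mdeg n \<omega>")
    case True
    then have "drl_gt n \<omega> \<alpha>" using drl_gt_total[OF \<alpha>M \<omega>M _ ne] not_gt by blast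
    then have "drl_gt n (\<omega>(\<mu> := u \<mu>)) (\<alpha>(\<mu> := u \<mu>))"
      using mu_ge_1 mu_le_n by (intro drl_gt_fun_upd) (auto simp: \<alpha>_def \<omega>_def)
    moreover have "mdvd (\<omega>(\<mu> := u \<mu>)) w" using deg True unfolding \<omega>_def mdvd_def by auto
    moreover have "mdeg n (\<omega>(\<mu> := u \<mu>)) = mdeg n u"
      using mdeg_fun_upd_mu[of \<omega> "u \<mu>"] deg True by (simp add: \<omega>_def)
    ultimately show ?thesis unfolding \<alpha>_def by (metis fun_upd_triv fun_upd_upd)
  next
    case False
    then show ?thesis
      using exists_mdvd_w_drl_gt[OF u\<mu> u_mu deg(3)] \<open>mdeg n \<alpha> \<le> mdeg n \<omega>\<close>
      unfolding \<alpha>_def \<omega>_def by simp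
  qed
  then show False using not_drl_gt_mingens_if_mdvd_w[OF u] by blast
qed

lemma fval_finite_below_mu:
  assumes "1 \<le> m" "m < \<mu>" "\<alpha> \<in> monoms n"
  shows "fval I m \<alpha> \<noteq> \<infinity>"
proof -
  let ?v = "(\<lambda>_. 0)(m := mdeg n w)"
  have "?v \<in> I"
  proof (rule mem_if_less_at_mu)
    show "?v \<in> monoms n" using assms mu_le_n by (intro monoms_fun_upd) (auto simp: monoms_def)
    show "mdeg n ?v = mdeg n w" using mdeg_fun_upd[of m n "\<lambda>_. 0"] assms mu_le_n by simp
  qed (use assms w_mu_pos in auto)
  moreover have "mdvd ?v (\<alpha>(m := mdeg n w))" unfolding mdvd_def by simp
  ultimately have "\<alpha>(m := mdeg n w) \<in> I"
    using monomial_ideal_mdvd[OF I_monomial] monoms_fun_upd[OF assms(3)] assms mu_le_n by simp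
  then show ?thesis by (rule fval_finite_if_mem)
qed

lemma fval_finite_at_mu:
  assumes \<alpha>: "\<alpha> \<in> monoms (\<mu> - 1)" and ge: "\<alpha> = w(\<mu> := 0) \<or> drl_gt n \<alpha> (w(\<mu> := 0))"
  shows "fval I \<mu> \<alpha> \<noteq> \<infinity>"
proof -
  have \<alpha>M: "\<alpha> \<in> monoms n" using monoms_mono[OF _ \<alpha>] mu_le_n by simp
  have \<alpha>_zero: "\<alpha> t = 0" if "\<mu> \<le> t" for t using monoms_zero[OF \<alpha>] that mu_ge_1 by simp
  have deg_\<alpha>: "mdeg n (\<alpha>(\<mu> := t)) = mdeg n \<alpha> + t" for t using mdeg_fun_upd_mu[of \<alpha> t] \<alpha>_zero by simp
  have deg_\<omega>: "mdeg n (w(\<mu> := 0)) + w \<mu> = mdeg n w" using mdeg_fun_upd_mu[of w 0] by simp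
  consider "\<alpha> = w(\<mu> := 0)" | "mdeg n (w(\<mu> := 0)) < mdeg n \<alpha>"
    | "mdeg n \<alpha> = mdeg n (w(\<mu> := 0))" "drl_gt n \<alpha> (w(\<mu> := 0))"
    using ge unfolding drl_gt_def by auto
  then show ?thesis
  proof cases
    case 1
    then have "\<alpha>(\<mu> := w \<mu>) = w" by simp
    then show ?thesis using w_mingens mingens_subset_ideal fval_finite_if_mem by (metis subsetD)
  next
    case 2
    text \<open>A divisor of x^\<alpha> of degree deg \<omega> + 1, times x_\<mu>^{\<omega>_\<mu> - 1}, lies above w.\<close>
    obtain \<beta> where \<beta>: "mdvd \<beta> \<alpha>" "mdeg n \<beta> = mdeg n (w(\<mu> := 0)) + 1"
      using exists_mdvd_mdeg[OF \<alpha>M] 2 by (metis Suc_eq_plus1 Suc_leI)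
    have \<beta>_zero: "\<beta> t = 0" if "\<mu> \<le> t" for t using \<beta>(1) \<alpha>_zero[OF that] unfolding mdvd_def by (metis le_zero_eq)
    have "\<beta>(\<mu> := w \<mu> - 1) \<in> I"
    proof (rule mem_if_less_at_mu)
      show "\<beta>(\<mu> := w \<mu> - 1) \<in> monoms n"
        using mdvd_monoms[OF \<beta>(1) \<alpha>M] mu_ge_1 mu_le_n by (rule monoms_fun_upd)
      show "mdeg n (\<beta>(\<mu> := w \<mu> - 1)) = mdeg n w"
        using mdeg_fun_upd_mu[of \<beta> "w \<mu> - 1"] \<beta>(2) \<beta>_zero deg_\<omega> w_mu_pos by simp
    qed (use w_mu_pos \<beta>_zero in auto)
    moreover have "mdvd (\<beta>(\<mu> := w \<mu> - 1)) (\<alpha>(\<mu> := w \<mu> - 1))" using \<beta>(1) unfolding mdvd_def by simp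
    ultimately have "\<alpha>(\<mu> := w \<mu> - 1) \<in> I"
      using monomial_ideal_mdvd[OF I_monomial] monoms_fun_upd[OF \<alpha>M] mu_ge_1 mu_le_n by blast
    then show ?thesis by (rule fval_finite_if_mem)
  next
    case 3
    have "drl_gt n (\<alpha>(\<mu> := w \<mu>)) ((w(\<mu> := 0))(\<mu> := w \<mu>))"
      using 3(2) \<alpha>_zero mu_ge_1 mu_le_n by (intro drl_gt_fun_upd) auto
    then have "\<alpha>(\<mu> := w \<mu>) \<in> I"
      using monoms_fun_upd[OF \<alpha>M] mu_ge_1 mu_le_n deg_\<alpha> deg_\<omega> 3(1)
      by (intro mem_if_drl_gt_last_gen) auto
    then show ?thesis by (rule fval_finite_if_mem)
  qed
qed

lemma trunc_w: "trunc (\<mu> - 1) w = w(\<mu> := 0)"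
  using w_above_mu mu_ge_1 by (auto simp: trunc_def fun_eq_iff)

lemma fval_1_finite: "fval I 1 (\<lambda>_. 0) \<noteq> \<infinity>"
proof (cases "\<mu> = 1")
  case True
  have "w(\<mu> := 0) = (\<lambda>_. 0)"
  proof
    fix k show "(w(\<mu> := 0)) k = 0"
      using True w_above_mu monoms_zero[OF w_monoms, of 0] by (cases "k = 0"; cases "k = 1") auto
  qed
  then show ?thesis using fval_finite_at_mu[of "\<lambda>_. 0"] True by (simp add: monoms_def)
next
  case False
  then show ?thesis using fval_finite_below_mu[of 1 "\<lambda>_. 0"] mu_ge_1 by (simp add: monoms_def)
qed

lemma fval_Iset_finite:
  assumes i: "i \<in> {1..\<mu> - 1}" and \<alpha>: "\<alpha> \<in> Iset n I w \<mu> i"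
  shows "fval I (i + 1) \<alpha> \<noteq> \<infinity>"
proof (cases "i + 1 < \<mu>")
  case True
  have "\<alpha> \<in> monoms i" using \<alpha> unfolding Iset_def by blast
  moreover have "i \<le> n" using i mu_le_n by auto
  ultimately have "\<alpha> \<in> monoms n" using monoms_mono by blast
  with True show ?thesis by (intro fval_finite_below_mu) auto
next
  case False
  then have "i = \<mu> - 1" using i by auto
  then have "\<alpha> \<in> monoms (\<mu> - 1)" "\<alpha> = w(\<mu> := 0) \<or> drl_gt n \<alpha> (w(\<mu> := 0))"
    using \<alpha> unfolding Iset_def trunc_w by blast+
  then have "fval I \<mu> \<alpha> \<noteq> \<infinity>" by (rule fval_finite_at_mu)
  with \<open>i = \<mu> - 1\<close> show ?thesis using mu_ge_1 by simp
qed

lemma mingens_subset_staircase: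
  assumes u: "u \<in> mingens I"
  shows "u \<in> {(\<lambda>_. 0)(1 := the_enat (fval I 1 (\<lambda>_. 0)))}
    \<union> (\<Union>i\<in>{1..\<mu>-1}. {\<alpha>(i+1 := the_enat (fval I (i+1) \<alpha>)) | \<alpha>. \<alpha> \<in> Iset n I w \<mu> i})"
proof -
  have u\<mu>: "u \<in> monoms \<mu>" using mingens_monoms_mu[OF u] .
  have "u \<noteq> (\<lambda>_. 0)" using u zero_not_mem mingens_subset_ideal by blast
  then obtain m where m: "1 \<le> m" "m \<le> \<mu>" "u m > 0" "\<forall>k>m. u k = 0"
    using monoms_max_support[OF u\<mu>] by blast
  define \<alpha> where "\<alpha> = u(m := 0)"
  have \<alpha>M: "\<alpha> \<in> monoms (m - 1)"
    unfolding monoms_def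
  proof (intro CollectI allI impI)
    fix k assume "\<alpha> k \<noteq> 0"
    then have "u k \<noteq> 0" "k \<noteq> m" by (auto simp: \<alpha>_def split: if_splits)
    moreover have "k \<le> m" using \<open>u k \<noteq> 0\<close> m(4) by (meson not_le)
    ultimately show "1 \<le> k \<and> k \<le> m - 1" using monomsD[OF u\<mu>] by fastforce
  qed
  have u_eq: "u = \<alpha>(m := the_enat (fval I m \<alpha>))"
    using mingens_fval_eq[OF u] unfolding \<alpha>_def by simp
  have staircase: "enat (\<alpha> j) < fval I j (trunc (j - 1) \<alpha>)" if "j \<in> {1..m - 1}" for j
  proof -
    have "trunc (j - 1) \<alpha> = trunc (j - 1) u" using that by (auto simp: \<alpha>_def trunc_def fun_eq_iff)
    then show ?thesis using mingens_less_fval[OF u _ m(3), of j] that by (auto simp: \<alpha>_def)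
  qed
  show ?thesis
  proof (cases "m = 1")
    case True
    then have "\<alpha> = (\<lambda>_. 0)" using \<alpha>M by (auto simp: monoms_def)
    then show ?thesis using u_eq True by simp
  next
    case False
    have "\<alpha> \<in> Iset n I w \<mu> (m - 1)"
      unfolding Iset_def
    proof (intro CollectI conjI ballI impI)
      assume "m - 1 = \<mu> - 1"
      then have "m = \<mu>" using m(1) mu_ge_1 by simp
      then show "\<alpha> = trunc (\<mu> - 1) w \<or> drl_gt n \<alpha> (trunc (\<mu> - 1) w)"
        using mingens_lower_part_ge[OF u] m(3) trunc_w unfolding \<alpha>_def by simp
    qed (use \<alpha>M staircase in auto)
    moreover have "m - 1 \<in> {1..\<mu> - 1}" using False m by auto
    moreover have "u = \<alpha>(m - 1 + 1 := the_enat (fval I (m - 1 + 1) \<alpha>))" using u_eq m(1) by simp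
    ultimately show ?thesis by blast
  qed
qed

lemma staircase_subset_mingens:
  "{(\<lambda>_. 0)(1 := the_enat (fval I 1 (\<lambda>_. 0)))}
    \<union> (\<Union>i\<in>{1..\<mu>-1}. {\<alpha>(i+1 := the_enat (fval I (i+1) \<alpha>)) | \<alpha>. \<alpha> \<in> Iset n I w \<mu> i})
   \<subseteq> mingens I"
proof -
  have gen: "\<alpha>(i + 1 := the_enat (fval I (i + 1) \<alpha>)) \<in> mingens I"
    if "\<alpha> \<in> monoms i" "i < n" "\<forall>j\<in>{1..i}. enat (\<alpha> j) < fval I j (trunc (j - 1) \<alpha>)"
      "fval I (i + 1) \<alpha> \<noteq> \<infinity>" for i \<alpha>
    using fval_fun_upd_in_mingens[OF I_monomial I_almost_revlex that(1-3)] that(4)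
    by (cases "fval I (i + 1) \<alpha>") auto
  have "(\<lambda>_. 0)(1 := the_enat (fval I 1 (\<lambda>_. 0))) \<in> mingens I"
    using gen[of "\<lambda>_. 0" 0] fval_1_finite mu_ge_1 mu_le_n by (simp add: monoms_def)
  moreover have "\<alpha>(i + 1 := the_enat (fval I (i + 1) \<alpha>)) \<in> mingens I"
    if i: "i \<in> {1..\<mu> - 1}" and \<alpha>: "\<alpha> \<in> Iset n I w \<mu> i" for i \<alpha>
  proof (rule gen)
    show "\<alpha> \<in> monoms i" "\<forall>j\<in>{1..i}. enat (\<alpha> j) < fval I j (trunc (j - 1) \<alpha>)"
      using \<alpha> unfolding Iset_def by blast+
    show "i < n" using i mu_le_n by auto
  qed (rule fval_Iset_finite[OF i \<alpha>])
  ultimately show ?thesis by blast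
qed

lemma mingens_eq:
  "mingens I = {(\<lambda>_. 0)(1 := the_enat (fval I 1 (\<lambda>_. 0)))}
    \<union> (\<Union>i\<in>{1..\<mu>-1}. {\<alpha>(i+1 := the_enat (fval I (i+1) \<alpha>)) | \<alpha>. \<alpha> \<in> Iset n I w \<mu> i})"
  using mingens_subset_staircase staircase_subset_mingens by blast

end

theorem proposition2p10:
  fixes n \<mu> :: nat and I :: "(nat \<Rightarrow> nat) set" and w :: "nat \<Rightarrow> nat"
  assumes "monomial_ideal n I"
    and "almost_revlex n I"
    and "last_gen n I w"
    and "1 \<le> \<mu>" and "\<mu> \<le> n" and "w \<mu> > 0" and "\<forall>i>\<mu>. w i = 0"
  shows "fval I 1 (\<lambda>_. 0) \<noteq> \<infinity>
    \<and> (\<forall>i\<in>{1..\<mu>-1}. \<forall>\<alpha>\<in>Iset n I w \<mu> i. fval I (i+1) \<alpha> \<noteq> \<infinity>)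
    \<and> mingens I =
       {(\<lambda>_. 0)(1 := the_enat (fval I 1 (\<lambda>_. 0)))}
       \<union> (\<Union>i\<in>{1..\<mu>-1}. {\<alpha>(i+1 := the_enat (fval I (i+1) \<alpha>)) | \<alpha>. \<alpha> \<in> Iset n I w \<mu> i})"
proof -
  interpret almost_revlex_ideal n \<mu> I w
    using assms by unfold_locales
  show ?thesis using fval_1_finite fval_Iset_finite mingens_eq by blast
qed

end
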